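(* Let $p\geq1$, $\mu>0$, and let $g:\mathbb{R}^n\to\mathbb{R}\cup\{+\infty\}$ be convex. Let $\lambda^{\ast}$ be the optimal solution of $$\min_{\lambda\in\mathbb{R}^n}\Big\{g(\lambda)+\frac{\mu}{1+\frac1p}\lVert\lambda\rVert^{1+\frac1p}\Big\},$$ and suppose $\lambda^{\ast}\neq0$. Let $\lambda^0\in\mathbb{R}^n$ and generate $\lambda^1,\dots,\lambda^N$ by: $t^k=\lVert\lambda^k\rVert^{\frac1p-1}$ if $\lambda^k\neq0$, $t^k=0$ otherwise, and $\lambda^{k+1}=\arg\min_{\lambda\in\mathbb{R}^n}\{g(\lambda)+\frac{\mu}{2}t^k\lVert\lambda\rVert^2\}$. Suppose $\lVert\lambda^0\rVert\geq\lVert\lambda^{\ast}\rVert$ and $\lambda^k\neq\lambda^{\ast}$ for $k=1,2,\dots,N$. Then $$\lVert\lambda^N-\lambda^{\ast}\rVert\leq\lVert\lambda^{\ast}\rVert\Big(e^{(1-\frac1p)^{N-1}\ln\frac{\lVert\lambda^0\rVert}{\lVert\lambda^{\ast}\rVert}}-1\Big)\leq\big(\lVert\lambda^0\rVert-\lVert\lambda^{\ast}\rVert\big)\Big(1-\frac1p\Big)^{N-1}.$$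
   Context: $\lVert\cdot\rVert$ is the Euclidean norm. The minimizers in the iteration are assumed to exist. *)

theory Defs
  imports "HOL-Analysis.Analysis" "HOL-Library.Extended_Real"
begin

definition ext_convex :: "('a::real_vector \<Rightarrow> ereal) \<Rightarrow> bool" where
  "ext_convex g \<longleftrightarrow> (\<forall>x. g x \<noteq> -\<infinity>) \<and>
     (\<forall>x y (s::real). 0 < s \<and> s < 1 \<longrightarrow>
        g ((1 - s) *\<^sub>R x + s *\<^sub>R y) \<le> ereal (1 - s) * g x + ereal s * g y)"

definition is_minimizer :: "('a \<Rightarrow> ereal) \<Rightarrow> 'a \<Rightarrow> bool" where
  "is_minimizer F x \<longleftrightarrow> (\<forall>y. F x \<le> F y)"

end

theory Submission
  imports Defs
begin

text \<open>Since \<open>s \<mapsto> s powr ((1 + 1/p) / 2)\<close> is concave, the penalty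
  \<open>\<mu> / (1 + 1/p) * norm x powr (1 + 1/p)\<close> is majorized by its quadratic tangent at \<open>lstar\<close>,
  so \<open>lstar\<close> also minimizes \<open>g x + d * (norm x)\<^sup>2\<close> for \<open>d = \<mu>/2 * norm lstar powr (1/p - 1)\<close>.
  Minimizers \<open>x\<close> of \<open>g + c * norm\<^sup>2\<close> and \<open>y\<close> of \<open>g + d * norm\<^sup>2\<close> satisfy
  \<open>(c x - d y) \<bullet> (y - x) \<ge> 0\<close> (monotonicity of the subdifferential of \<open>g\<close>), which for
  \<open>0 < c \<le> d\<close> gives \<open>norm y \<le> norm x\<close> and \<open>norm (x - y) \<le> (d/c - 1) * norm y\<close>.
  In the \<open>k\<close>-th step \<open>d/c = R\<^sub>k powr q\<close>, where \<open>R\<^sub>k = norm (lam k) / norm lstar\<close> and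
  \<open>q = 1 - 1/p\<close>. Hence \<open>R\<^sub>k \<ge> 1\<close> and \<open>R\<^sub>k\<^sub>+\<^sub>1 \<le> R\<^sub>k powr q\<close>, so \<open>R\<^sub>k \<le> R\<^sub>0 powr q\<^sup>k\<close>;
  the second estimate is Bernoulli's inequality \<open>R powr \<theta> - 1 \<le> \<theta> * (R - 1)\<close>.\<close>

lemma powr_le_tangent_at_1:
  fixes r a :: real
  assumes "0 \<le> r" "0 \<le> a" "a \<le> 1"
  shows "r powr a \<le> 1 + a * (r - 1)"
proof (cases "r = 0")
  case True
  then show ?thesis using assms by simp
next
  case False
  then have "r powr a * 1 powr (1 - a) \<le> a * r + (1 - a) * 1"
    using assms by (intro Youngs_inequality_0) auto
  then show ?thesis by (simp add: algebra_simps)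
qed

lemma powr_le_quadratic_tangent:
  fixes u v a :: real
  assumes "0 \<le> u" "0 < v" "0 < a" "a \<le> 2"
  shows "u powr a / a - v powr a / a \<le> v powr (a - 2) / 2 * (u\<^sup>2 - v\<^sup>2)"
proof -
  define r where "r = (u / v)\<^sup>2"
  have "r powr (a / 2) = (u / v) powr a"
    using assms by (simp add: r_def powr_powr flip: powr_numeral)
  also have "\<dots> = u powr a / v powr a"
    using assms by (simp add: powr_divide)
  finally have "u powr a / v powr a \<le> 1 + a / 2 * (r - 1)"
    using powr_le_tangent_at_1[of r "a / 2"] assms by (simp add: r_def)
  then have "u powr a \<le> v powr a + a / 2 * (v powr a * r - v powr a)"
    using assms by (simp add: field_simps)
  moreover have "v powr a * r - v powr a = v powr (a - 2) * (u\<^sup>2 - v\<^sup>2)"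
    using assms by (simp add: r_def powr_diff field_simps)
  ultimately have "u powr a \<le> v powr a + a * (v powr (a - 2) / 2 * (u\<^sup>2 - v\<^sup>2))"
    by simp
  then show ?thesis
    using assms by (simp add: field_simps)
qed

lemma is_minimizer_add_majorant:
  fixes g :: "'a \<Rightarrow> ereal" and \<phi> \<psi> :: "'a \<Rightarrow> real"
  assumes "is_minimizer (\<lambda>x. g x + ereal (\<phi> x)) z"
    and "\<And>x. \<phi> x - \<phi> z \<le> \<psi> x - \<psi> z"
  shows "is_minimizer (\<lambda>x. g x + ereal (\<psi> x)) z"
  unfolding is_minimizer_def
proof
  fix x
  have "g z + ereal (\<phi> z) \<le> g x + ereal (\<phi> x)"
    using assms(1) by (simp add: is_minimizer_def)
  then have "g z + ereal (\<phi> z) + ereal (\<psi> z - \<phi> z) \<le> g x + ereal (\<phi> x) + ereal (\<psi> z - \<phi> z)"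
    by (rule add_right_mono)
  also have "\<dots> \<le> g x + ereal (\<psi> x)"
    using assms(2)[of x] by (cases "g x") auto
  finally show "g z + ereal (\<psi> z) \<le> g x + ereal (\<psi> x)"
    by (cases "g z") auto
qed

lemma is_minimizer_norm_powr_imp_quadratic:
  fixes g :: "'a::real_normed_vector \<Rightarrow> ereal"
  assumes "0 < a" "a \<le> 2" "0 \<le> \<mu>" "z \<noteq> 0"
    and "is_minimizer (\<lambda>x. g x + ereal (\<mu> / a * norm x powr a)) z"
  shows "is_minimizer (\<lambda>x. g x + ereal (\<mu> / 2 * norm z powr (a - 2) * (norm x)\<^sup>2)) z"
proof (rule is_minimizer_add_majorant[OF assms(5)])
  fix x
  have "norm x powr a / a - norm z powr a / a \<le> norm z powr (a - 2) / 2 * ((norm x)\<^sup>2 - (norm z)\<^sup>2)"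
    using assms by (intro powr_le_quadratic_tangent) auto
  from mult_left_mono[OF this assms(3)]
  show "\<mu> / a * norm x powr a - \<mu> / a * norm z powr a
    \<le> \<mu> / 2 * norm z powr (a - 2) * (norm x)\<^sup>2 - \<mu> / 2 * norm z powr (a - 2) * (norm z)\<^sup>2"
    by (simp add: algebra_simps)
qed

lemma ext_convex_finite_value:
  assumes "ext_convex g" "g x \<noteq> \<infinity>"
  obtains r where "g x = ereal r"
  using assms by (cases "g x") (auto simp: ext_convex_def)

lemma quadratic_minimizer_subgradient:
  fixes g :: "'a::real_inner \<Rightarrow> ereal"
  assumes cvx: "ext_convex g"
    and min: "is_minimizer (\<lambda>x. g x + ereal (c * (norm x)\<^sup>2)) x"
  shows "g x \<le> g y + ereal (2 * c * (x \<bullet> (y - x)))"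
proof (cases "g y = \<infinity>")
  case True
  then show ?thesis by simp
next
  case False
  then obtain gy where gy: "g y = ereal gy"
    by (rule ext_convex_finite_value[OF cvx])
  have "g x + ereal (c * (norm x)\<^sup>2) \<le> g y + ereal (c * (norm y)\<^sup>2)"
    using min by (simp add: is_minimizer_def)
  then have "g x \<noteq> \<infinity>"
    using gy by auto
  then obtain gx where gx: "g x = ereal gx"
    by (rule ext_convex_finite_value[OF cvx])
  let ?A = "gy + 2 * c * (x \<bullet> (y - x))" and ?K = "c * (norm (y - x))\<^sup>2"
  have "gx \<le> ?A + s * ?K" if s: "0 < s" "s < 1" for s
  proof -
    define z where "z = (1 - s) *\<^sub>R x + s *\<^sub>R y"
    have "g z \<le> ereal (1 - s) * g x + ereal s * g y"
      using cvx s by (simp add: ext_convex_def z_def)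
    moreover have "g z \<noteq> -\<infinity>"
      using cvx by (simp add: ext_convex_def)
    ultimately obtain gz where gz: "g z = ereal gz" "gz \<le> (1 - s) * gx + s * gy"
      using gx gy by (cases "g z") auto
    have norm_z: "(norm z)\<^sup>2 = (norm x)\<^sup>2 + 2 * s * (x \<bullet> (y - x)) + s\<^sup>2 * (norm (y - x))\<^sup>2"
      unfolding z_def power2_norm_eq_inner
      by (simp add: inner_diff_left inner_diff_right algebra_simps power2_eq_square inner_commute)
    have "g x + ereal (c * (norm x)\<^sup>2) \<le> g z + ereal (c * (norm z)\<^sup>2)"
      using min by (simp add: is_minimizer_def)
    then have "gx + c * (norm x)\<^sup>2 \<le> gz + c * (norm z)\<^sup>2"
      using gx gz by simp
    moreover have "c * (norm z)\<^sup>2 = c * (norm x)\<^sup>2 + s * (2 * c * (x \<bullet> (y - x))) + s * (s * ?K)"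
      unfolding norm_z by (simp add: algebra_simps power2_eq_square)
    ultimately have "s * gx \<le> s * (?A + s * ?K)"
      using gz(2) by (simp add: algebra_simps)
    then show ?thesis
      using s by simp
  qed
  then have "gx \<le> ?A"
  proof (intro tendsto_lowerbound)
    show "((\<lambda>s. ?A + s * ?K) \<longlongrightarrow> ?A) (at_right 0)"
      by (auto intro!: tendsto_eq_intros)
  qed (auto simp: eventually_at_right_field intro!: exI[of _ 1])
  then show ?thesis
    using gx gy by simp
qed

lemma quadratic_minimizers_monotone:
  fixes g :: "'a::real_inner \<Rightarrow> ereal"
  assumes cvx: "ext_convex g" and "g y \<noteq> \<infinity>"
    and "is_minimizer (\<lambda>x. g x + ereal (c * (norm x)\<^sup>2)) x"
    and "is_minimizer (\<lambda>x. g x + ereal (d * (norm x)\<^sup>2)) y"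
  shows "0 \<le> (c *\<^sub>R x - d *\<^sub>R y) \<bullet> (y - x)"
proof -
  obtain gy where gy: "g y = ereal gy"
    by (rule ext_convex_finite_value[OF cvx \<open>g y \<noteq> \<infinity>\<close>])
  have x_sub: "g x \<le> g y + ereal (2 * c * (x \<bullet> (y - x)))"
    using quadratic_minimizer_subgradient[OF cvx assms(3)] .
  have y_sub: "g y \<le> g x + ereal (2 * d * (y \<bullet> (x - y)))"
    using quadratic_minimizer_subgradient[OF cvx assms(4)] .
  have "g x \<noteq> \<infinity>"
    using x_sub gy by auto
  then obtain gx where gx: "g x = ereal gx"
    by (rule ext_convex_finite_value[OF cvx])
  have "0 \<le> 2 * c * (x \<bullet> (y - x)) + 2 * d * (y \<bullet> (x - y))"
    using x_sub y_sub gx gy by simp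
  also have "\<dots> = 2 * ((c *\<^sub>R x - d *\<^sub>R y) \<bullet> (y - x))"
    by (simp add: inner_diff_left inner_diff_right algebra_simps)
  finally show ?thesis
    by simp
qed

lemma monotone_pair_dist_le:
  fixes x y :: "'a::real_inner"
  assumes "c \<le> d" "0 \<le> (c *\<^sub>R x - d *\<^sub>R y) \<bullet> (y - x)"
  shows "c * norm (x - y) \<le> (d - c) * norm y"
proof (cases "x = y")
  case True
  then show ?thesis using assms(1) by simp
next
  case False
  have "(c *\<^sub>R x - d *\<^sub>R y) \<bullet> (y - x) = (d - c) * (y \<bullet> (x - y)) - c * (norm (x - y))\<^sup>2"
    by (simp add: power2_norm_eq_inner inner_diff_left inner_diff_right algebra_simps inner_commute)
  also have "\<dots> \<le> (d - c) * (norm y * norm (x - y)) - c * (norm (x - y))\<^sup>2"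
    using assms(1) norm_cauchy_schwarz[of y "x - y"] by (simp add: mult_left_mono)
  finally have "c * norm (x - y) * norm (x - y) \<le> (d - c) * norm y * norm (x - y)"
    using assms(2) by (simp add: power2_eq_square algebra_simps)
  then show ?thesis
    using False by simp
qed

lemma monotone_pair_norm_le:
  fixes x y :: "'a::real_inner"
  assumes "0 < c" "c \<le> d" "0 \<le> (c *\<^sub>R x - d *\<^sub>R y) \<bullet> (y - x)"
  shows "norm y \<le> norm x"
proof (rule ccontr)
  assume "\<not> norm y \<le> norm x"
  then have "c * norm x < d * norm y"
    using assms(1,2) mult_right_mono[OF assms(2) norm_ge_zero[of x]]
      mult_strict_left_mono[of "norm x" "norm y" d] by linarith
  have "(c *\<^sub>R x - d *\<^sub>R y) \<bullet> (y - x) = (c + d) * (x \<bullet> y) - c * (norm x)\<^sup>2 - d * (norm y)\<^sup>2"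
    by (simp add: power2_norm_eq_inner inner_diff_left inner_diff_right algebra_simps inner_commute)
  also have "\<dots> \<le> (c + d) * (norm x * norm y) - c * (norm x)\<^sup>2 - d * (norm y)\<^sup>2"
    using assms(1,2) norm_cauchy_schwarz[of x y] by (simp add: mult_left_mono)
  also have "\<dots> = - ((d * norm y - c * norm x) * (norm y - norm x))"
    by (simp add: algebra_simps power2_eq_square)
  also have "\<dots> < 0"
    using \<open>c * norm x < d * norm y\<close> \<open>\<not> norm y \<le> norm x\<close> by simp
  finally show False
    using assms(3) by simp
qed

lemma reweighted_quadratic_step:
  fixes g :: "'a::real_inner \<Rightarrow> ereal"
  assumes cvx: "ext_convex g" and "g y \<noteq> \<infinity>"
    and "0 < \<mu>" "e \<le> 0" "y \<noteq> 0" "norm y \<le> norm z"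
    and "is_minimizer (\<lambda>x. g x + ereal (\<mu> / 2 * norm y powr e * (norm x)\<^sup>2)) y"
    and "is_minimizer (\<lambda>x. g x + ereal (\<mu> / 2 * norm z powr e * (norm x)\<^sup>2)) x"
  shows "norm y \<le> norm x \<and> norm (x - y) \<le> norm y * ((norm z / norm y) powr (- e) - 1)"
proof -
  define c where "c = \<mu> / 2 * norm z powr e"
  define d where "d = \<mu> / 2 * norm y powr e"
  have "z \<noteq> 0"
    using assms(5,6) by auto
  then have "0 < c"
    using assms(3) by (simp add: c_def)
  moreover have "c \<le> d"
    using assms(3-6) powr_mono2'[of e "norm y" "norm z"] by (simp add: c_def d_def)
  moreover have "0 \<le> (c *\<^sub>R x - d *\<^sub>R y) \<bullet> (y - x)"
    using quadratic_minimizers_monotone[OF cvx assms(2)] assms(7,8) by (simp add: c_def d_def)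
  ultimately have "norm y \<le> norm x" "norm (x - y) \<le> (d / c - 1) * norm y"
    using monotone_pair_norm_le monotone_pair_dist_le[of c d x y]
    by (auto simp: field_simps)
  moreover have "d / c = (norm z / norm y) powr (- e)"
    using assms(3,5,6) by (simp add: c_def d_def powr_minus_divide powr_divide)
  ultimately show ?thesis
    by (simp add: mult.commute)
qed

lemma iterated_powr_bound:
  fixes R :: "nat \<Rightarrow> real"
  assumes "0 \<le> q" "\<And>k. 0 \<le> R k" "\<And>k. k < n \<Longrightarrow> R (Suc k) \<le> R k powr q"
  shows "R n \<le> R 0 powr (q ^ n)"
  using assms(3)
proof (induction n)
  case 0
  show ?case
    using assms(2)[of 0] by (cases "R 0 = 0") auto
next
  case (Suc n)
  have "R (Suc n) \<le> R n powr q"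
    using Suc.prems by simp
  also have "\<dots> \<le> (R 0 powr (q ^ n)) powr q"
    using Suc assms(1,2) by (intro powr_mono2) auto
  also have "\<dots> = R 0 powr (q ^ Suc n)"
    by (simp add: powr_powr mult.commute)
  finally show ?case .
qed

locale reweighted_quadratic_iteration =
  fixes g :: "'a::real_inner \<Rightarrow> ereal" and \<mu> e :: real and y :: 'a
    and lam :: "nat \<Rightarrow> 'a" and N :: nat
  assumes convex: "ext_convex g" and finite_at_y: "g y \<noteq> \<infinity>"
    and \<mu>_pos: "0 < \<mu>" and e_nonpos: "e \<le> 0" and y_nonzero: "y \<noteq> 0"
    and norm_start: "norm y \<le> norm (lam 0)"
    and y_min: "is_minimizer (\<lambda>x. g x + ereal (\<mu> / 2 * norm y powr e * (norm x)\<^sup>2)) y"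
    and lam_min: "\<And>k. k < N \<Longrightarrow>
      is_minimizer (\<lambda>x. g x + ereal (\<mu> / 2 * norm (lam k) powr e * (norm x)\<^sup>2)) (lam (Suc k))"
begin

lemma step:
  assumes "k < N" "norm y \<le> norm (lam k)"
  shows "norm y \<le> norm (lam (Suc k)) \<and>
    norm (lam (Suc k) - y) \<le> norm y * ((norm (lam k) / norm y) powr (- e) - 1)"
  using reweighted_quadratic_step[OF convex finite_at_y \<mu>_pos e_nonpos y_nonzero assms(2) y_min
      lam_min[OF assms(1)]] .

lemma norm_ge:
  assumes "k \<le> N"
  shows "norm y \<le> norm (lam k)"
  using assms by (induction k) (use norm_start step in auto)

lemma dist_le:
  assumes "k < N"
  shows "norm (lam (Suc k) - y) \<le> norm y * ((norm (lam 0) / norm y) powr ((- e) ^ Suc k) - 1)"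
proof -
  define R where "R j = norm (lam j) / norm y" for j
  have "R (Suc j) \<le> R j powr (- e)" if "j < N" for j
  proof -
    have "norm (lam (Suc j)) \<le> norm y + norm (lam (Suc j) - y)"
      using norm_triangle_ineq2[of "lam (Suc j)" y] by simp
    also have "\<dots> \<le> norm y * R j powr (- e)"
      using step[OF that norm_ge] that by (simp add: R_def algebra_simps)
    finally show ?thesis
      using y_nonzero by (simp add: R_def field_simps)
  qed
  then have "R k \<le> R 0 powr ((- e) ^ k)"
    using iterated_powr_bound[of "- e" R k] e_nonpos assms by (simp add: R_def)
  then have "R k powr (- e) \<le> (R 0 powr ((- e) ^ k)) powr (- e)"
    using e_nonpos by (intro powr_mono2) (auto simp: R_def)
  also have "\<dots> = R 0 powr ((- e) ^ Suc k)"
    by (simp add: powr_powr mult.commute)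
  finally have "norm y * (R k powr (- e) - 1) \<le> norm y * (R 0 powr ((- e) ^ Suc k) - 1)"
    by (simp add: mult_left_mono)
  then show ?thesis
    using step[OF assms norm_ge] assms by (simp add: R_def)
qed

end

theorem theorem4p6:
  fixes g :: "'a::euclidean_space \<Rightarrow> ereal"
    and p \<mu> :: real and lstar :: 'a and lam :: "nat \<Rightarrow> 'a" and N :: nat
  defines "t \<equiv> (\<lambda>k. if lam k \<noteq> 0 then norm (lam k) powr (1 / p - 1) else 0)"
  assumes "p \<ge> 1" and "\<mu> > 0"
    and "ext_convex g"
    and "is_minimizer (\<lambda>x. g x + ereal (\<mu> / (1 + 1 / p) * norm x powr (1 + 1 / p))) lstar"
    and "g lstar \<noteq> \<infinity>"
    and "lstar \<noteq> 0"
    and "N \<ge> 1"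
    and "\<And>k. k < N \<Longrightarrow>
           is_minimizer (\<lambda>x. g x + ereal (\<mu> / 2 * t k * (norm x)\<^sup>2)) (lam (Suc k))"
    and "norm (lam 0) \<ge> norm lstar"
    and "\<And>k. 1 \<le> k \<Longrightarrow> k \<le> N \<Longrightarrow> lam k \<noteq> lstar"
  shows "norm (lam N - lstar)
           \<le> norm lstar * (exp ((1 - 1 / p) ^ (N - 1) * ln (norm (lam 0) / norm lstar)) - 1)
       \<and> norm lstar * (exp ((1 - 1 / p) ^ (N - 1) * ln (norm (lam 0) / norm lstar)) - 1)
           \<le> (norm (lam 0) - norm lstar) * (1 - 1 / p) ^ (N - 1)"
proof -
  define q where "q = 1 - 1 / p"
  define R\<^sub>0 where "R\<^sub>0 = norm (lam 0) / norm lstar"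
  obtain m where N: "N = Suc m"
    using assms(8) by (cases N) auto
  have "0 < 1 / p" "0 \<le> q" "q \<le> 1" "1 \<le> R\<^sub>0"
    using assms(2,7,10) by (auto simp: q_def R\<^sub>0_def)
  have "is_minimizer (\<lambda>x. g x + ereal (\<mu> / 2 * norm lstar powr (1 / p - 1) * (norm x)\<^sup>2)) lstar"
    using is_minimizer_norm_powr_imp_quadratic[of "1 + 1 / p" \<mu> lstar g] assms(2,3,5,7) \<open>0 < 1 / p\<close>
    by simp
  moreover have "t k = norm (lam k) powr (1 / p - 1)" for k
    \<comment> \<open>also for \<open>lam k = 0\<close>, since \<open>0 powr _ = 0\<close>\<close>
    by (simp add: t_def)
  ultimately interpret reweighted_quadratic_iteration g \<mu> "1 / p - 1" lstar lam N
    using assms by unfold_locales auto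
  have "norm (lam N - lstar) \<le> norm lstar * (R\<^sub>0 powr (q ^ N) - 1)"
    using dist_le[of m] N by (simp add: R\<^sub>0_def q_def)
  also have "\<dots> \<le> norm lstar * (R\<^sub>0 powr (q ^ m) - 1)"
    using powr_mono[OF power_decreasing[of m N q] \<open>1 \<le> R\<^sub>0\<close>] \<open>0 \<le> q\<close> \<open>q \<le> 1\<close> N
    by (simp add: mult_left_mono)
  finally have "norm (lam N - lstar) \<le> norm lstar * (R\<^sub>0 powr (q ^ m) - 1)" .
  moreover have "norm lstar * (R\<^sub>0 powr (q ^ m) - 1) \<le> (norm (lam 0) - norm lstar) * q ^ m"
    using powr_le_tangent_at_1[of R\<^sub>0 "q ^ m"] \<open>0 \<le> q\<close> \<open>q \<le> 1\<close> \<open>1 \<le> R\<^sub>0\<close> assms(7)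
    by (simp add: power_le_one R\<^sub>0_def field_simps)
  moreover have "exp (q ^ m * ln R\<^sub>0) = R\<^sub>0 powr (q ^ m)"
    using \<open>1 \<le> R\<^sub>0\<close> by (simp add: powr_def)
  ultimately show ?thesis
    by (simp add: N flip: q_def R\<^sub>0_def)
qed

end
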